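(* Let $n \in \mathbb{N}$ and $M,N \in \mathcal{M}_n(\mathbb{C})$. Let $P_\perp$ denote the orthogonal projection of $\mathbb{C}^{2n}$ onto $\left[\mathcal{R}\begin{pmatrix} N \\ \overline{M}\end{pmatrix}\right]^{\perp}$, where $\begin{pmatrix} N \\ \overline{M}\end{pmatrix}$ is the $2n\times n$ complex matrix obtained by stacking $N$ on top of $\overline{M}$. The following are equivalent: \begin{enumerate} \item $\{ z \in \mathbb{C}^n \mid Mz + N\bar{z} = 0\}$ is a complex vector subspace of $\mathbb{C}^n$ (i.e. it is closed under multiplication by $i$). \item The (real-linear) map $\mathbb{C}^n \to \mathbb{C}^{2n}$, $z \mapsto P_\perp \begin{pmatrix} z \\ \bar z\end{pmatrix}$, is injective. \item There exist $U,V \in \mathcal{M}_n(\mathbb{C})$ such that for every $p \in \mathcal{R}(M,N)$, $$\{ z \in \mathbb{C}^n \mid Mz + N\bar z = p\} = \{ z \in \mathbb{C}^n \mid (UM + V\overline{N})z = Up + V\overline{p}\}.$$ \end{enumerate}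
   Context: $\mathcal{M}_n(\mathbb{C})$ is the set of $n\times n$ complex matrices; $\bar z$, $\overline{M}$ denote entrywise complex conjugation. $\mathbb{C}^{2n}$ is equipped with the Hermitian inner product $\langle u,v\rangle = \sum_{k=1}^{2n} u_k \bar v_k$, and $\perp$ denotes the orthogonal complement with respect to it. $\mathcal{R}(X)$ denotes the range (column space) of a matrix $X$. The range of the system is $\mathcal{R}(M,N) := \{ p \in \mathbb{C}^n \mid \exists z \in \mathbb{C}^n : Mz + N\bar z = p\}$. *)

theory Defs
  imports "HOL-Analysis.Analysis"
begin

definition cvec :: "complex^'n \<Rightarrow> complex^'n" where
  "cvec z = (\<chi> i. cnj (z $ i))"

definition cmat :: "complex^'n^'m \<Rightarrow> complex^'n^'m" where
  "cmat M = (\<chi> i j. cnj (M $ i $ j))"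

definition herm :: "complex^'m \<Rightarrow> complex^'m \<Rightarrow> complex" where
  "herm u v = (\<Sum>k\<in>UNIV. u $ k * cnj (v $ k))"

definition horth :: "(complex^'m) set \<Rightarrow> (complex^'m) set" where
  "horth S = {u. \<forall>v\<in>S. herm u v = 0}"

definition hproj :: "(complex^'m) set \<Rightarrow> complex^'m \<Rightarrow> complex^'m" where
  "hproj S x = (THE y. y \<in> S \<and> x - y \<in> horth S)"

definition crange :: "complex^'n^'m \<Rightarrow> (complex^'m) set" where
  "crange A = {A *v x | x. True}"

definition stack_mat :: "complex^'n^'k \<Rightarrow> complex^'n^'k \<Rightarrow> complex^'n^('k + 'k)" where
  "stack_mat A B = (\<chi> i. case i of Inl j \<Rightarrow> A $ j | Inr j \<Rightarrow> B $ j)"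

definition stack_vec :: "complex^'n \<Rightarrow> complex^'n \<Rightarrow> complex^('n + 'n)" where
  "stack_vec u v = (\<chi> i. case i of Inl j \<Rightarrow> u $ j | Inr j \<Rightarrow> v $ j)"

definition sys_range :: "complex^'n^'n \<Rightarrow> complex^'n^'n \<Rightarrow> (complex^'n) set" where
  "sys_range M N = {p. \<exists>z. M *v z + N *v cvec z = p}"

end

theory Submission
  imports Defs
begin

text \<open>Let \<open>K = {z. M z + N z\<^sup>- = 0}\<close>. All three conditions are equivalent to:
  \<open>M\<close> vanishes on the real subspace \<open>{y. M y = N y\<^sup>-}\<close>.
  If \<open>M y = N y\<^sup>- = w\<close>, then \<open>\<i> y \<in> K\<close> but \<open>\<i> (\<i> y) = -y\<close> lies in \<open>K\<close> only when
  \<open>w = 0\<close>; conversely the condition forces \<open>K = ker M \<inter> ker N\<^sup>-\<close>, a complex subspace.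
  The vectors \<open>(w; w\<^sup>-)\<close> in the range of \<open>A = (N; M\<^sup>-)\<close> are exactly the \<open>(M y; (M y)\<^sup>-)\<close>
  with \<open>M y = N y\<^sup>-\<close>, and \<open>P\<^sub>\<bottom>\<close> identifies two vectors iff their difference lies in that range;
  this gives (2).
  For (3), put \<open>B = (M; N\<^sup>-)\<close>, so that \<open>M z + N z\<^sup>- = p\<close> reads \<open>(p; p\<^sup>-) = B z + A z\<^sup>-\<close>, and apply
  the complex-linear map \<open>L = B\<^sup>* P\<^sub>\<bottom>\<close>. It kills the range of \<open>A\<close>, and \<open>L B x = 0\<close> forces
  \<open>P\<^sub>\<bottom> B x = 0\<close> because \<open>\<langle>L B x, x\<rangle> = \<parallel>P\<^sub>\<bottom> B x\<parallel>\<^sup>2\<close>, i.e. \<open>B x = A c\<close>, which under the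
  condition gives \<open>M x = 0 = N\<^sup>- x\<close>. Splitting \<open>L\<close> into its two \<open>n \<times> n\<close> blocks \<open>U, V\<close> yields (3).
  Conversely, (3) with \<open>p = 0\<close> exhibits \<open>K\<close> as the kernel of a complex matrix.\<close>

lemma cvec_add [simp]: "cvec (x + y) = cvec x + cvec y"
  by (simp add: cvec_def vec_eq_iff)

lemma cvec_diff [simp]: "cvec (x - y) = cvec x - cvec y"
  by (simp add: cvec_def vec_eq_iff)

lemma cvec_minus [simp]: "cvec (- x) = - cvec x"
  by (simp add: cvec_def vec_eq_iff)

lemma cvec_zero [simp]: "cvec 0 = 0"
  by (simp add: cvec_def vec_eq_iff)

lemma cvec_scale [simp]: "cvec (c *s x) = cnj c *s cvec x"
  by (simp add: cvec_def vec_eq_iff)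

lemma cvec_cvec [simp]: "cvec (cvec x) = x"
  by (simp add: cvec_def vec_eq_iff)

lemma cmat_cmat [simp]: "cmat (cmat A) = A"
  by (simp add: cmat_def vec_eq_iff)

lemma cvec_matrix_vector_mult [simp]: "cvec (A *v x) = cmat A *v cvec x"
  by (simp add: cvec_def cmat_def vec_eq_iff matrix_vector_mult_def)

lemma matrix_vector_mult_minus [simp]:
  fixes A :: "'a::comm_ring_1^'n^'m"
  shows "A *v (- x) = - (A *v x)"
  by (simp add: matrix_vector_mult_def vec_eq_iff sum_negf)

lemma stack_mat_vector_mult: "stack_mat A B *v x = stack_vec (A *v x) (B *v x)"
  by (simp add: stack_mat_def stack_vec_def vec_eq_iff matrix_vector_mult_def split: sum.splits)

lemma stack_vec_add: "stack_vec a b + stack_vec c d = stack_vec (a + c) (b + d)"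
  by (simp add: stack_vec_def vec_eq_iff split: sum.splits)

lemma stack_vec_diff: "stack_vec a b - stack_vec c d = stack_vec (a - c) (b - d)"
  by (simp add: stack_vec_def vec_eq_iff split: sum.splits)

lemma stack_vec_eq_iff: "stack_vec a b = stack_vec c d \<longleftrightarrow> a = c \<and> b = d"
proof
  assume h: "stack_vec a b = stack_vec c d"
  have "a $ j = c $ j \<and> b $ j = d $ j" for j
    using arg_cong[OF h, of "\<lambda>v. v $ Inl j"] arg_cong[OF h, of "\<lambda>v. v $ Inr j"]
    by (simp add: stack_vec_def)
  then show "a = c \<and> b = d"
    by (simp add: vec_eq_iff)
qed simp

lemma stack_vec_zero: "stack_vec 0 0 = 0"
  by (simp add: stack_vec_def vec_eq_iff split: sum.splits)

lemma matrix_mult_stack_split: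
  "(L ** stack_mat (mat 1) 0) *v a + (L ** stack_mat 0 (mat 1)) *v b = L *v stack_vec a b"
  by (simp add: matrix_vector_mul_assoc[symmetric] stack_mat_vector_mult
      matrix_vector_right_distrib[symmetric] stack_vec_add)

lemma herm_add_left: "herm (u + w) v = herm u v + herm w v"
  by (simp add: herm_def sum.distrib distrib_right)

lemma herm_diff_left: "herm (u - w) v = herm u v - herm w v"
  by (simp add: herm_def sum_subtractf left_diff_distrib)

lemma herm_diff_right: "herm u (v - w) = herm u v - herm u w"
  by (simp add: herm_def sum_subtractf right_diff_distrib)

lemma herm_scale_left: "herm (c *s u) v = c * herm u v"
  by (simp add: herm_def sum_distrib_left mult.assoc)

lemma herm_scale_right: "herm u (c *s v) = cnj c * herm u v"
  by (simp add: herm_def sum_distrib_left mult_ac)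

lemma herm_commute: "herm v u = cnj (herm u v)"
  by (simp add: herm_def mult.commute)

lemma herm_zero_right [simp]: "herm u 0 = 0"
  by (simp add: herm_def)

lemma Re_herm: "Re (herm u v) = inner u v"
  by (simp add: herm_def inner_vec_def inner_complex_def Re_sum)

lemma herm_self_eq_0_iff: "herm u u = 0 \<longleftrightarrow> u = 0"
  by (metis Re_herm herm_zero_right inner_eq_zero_iff zero_complex.simps(1))

lemma herm_zero_left [simp]: "herm 0 v = 0"
  by (simp add: herm_def)

definition hadj :: "complex^'n^'m \<Rightarrow> complex^'m^'n" where
  "hadj B = cmat (transpose B)"

lemma herm_hadj: "herm (hadj B *v v) x = herm v (B *v x)"
proof -
  have "herm (hadj B *v v) x = (\<Sum>k\<in>UNIV. \<Sum>j\<in>UNIV. v$j * (cnj (B$j$k) * cnj (x$k)))"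
    by (simp add: herm_def hadj_def cmat_def transpose_def matrix_vector_mult_def
        sum_distrib_left sum_distrib_right mult_ac)
  also have "\<dots> = herm v (B *v x)"
    by (subst sum.swap) (simp add: herm_def matrix_vector_mult_def cnj_sum sum_distrib_left)
  finally show ?thesis .
qed

lemma horth_herm_eq_0: "u \<in> horth S \<Longrightarrow> v \<in> S \<Longrightarrow> herm u v = 0"
  by (simp add: horth_def)

lemma horth_diff: "u \<in> horth S \<Longrightarrow> v \<in> horth S \<Longrightarrow> u - v \<in> horth S"
  by (simp add: horth_def herm_diff_left)

lemma horth_add: "u \<in> horth S \<Longrightarrow> v \<in> horth S \<Longrightarrow> u + v \<in> horth S"
  by (simp add: horth_def herm_add_left)

lemma horth_scale: "u \<in> horth S \<Longrightarrow> c *s u \<in> horth S"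
  by (simp add: horth_def herm_scale_left)

lemma subset_horth_horth: "S \<subseteq> horth (horth S)"
proof
  fix u assume "u \<in> S"
  then show "u \<in> horth (horth S)"
    unfolding horth_def by (auto simp: herm_commute[of u])
qed

lemma hproj_horth_unique:
  assumes "z \<in> horth S" and "x - z \<in> S"
  shows "hproj (horth S) x = z"
  unfolding hproj_def
proof (rule the_equality)
  show "z \<in> horth S \<and> x - z \<in> horth (horth S)"
    using assms subset_horth_horth by blast
next
  fix y assume y: "y \<in> horth S \<and> x - y \<in> horth (horth S)"
  have zy: "z - y \<in> horth S"
    using y assms(1) horth_diff by blast
  have "herm (z - y) (z - y) = herm ((x - y) - (x - z)) (z - y)"
    by simp
  also have "\<dots> = herm (x - y) (z - y) - herm (x - z) (z - y)"
    by (rule herm_diff_left)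
  also have "\<dots> = 0"
  proof -
    have "x - z \<in> horth (horth S)"
      using assms(2) subset_horth_horth by blast
    with y zy show ?thesis
      unfolding horth_def by simp
  qed
  finally show "y = z"
    by (simp add: herm_self_eq_0_iff)
qed

lemma hproj_horth:
  assumes "vec.subspace S"
  shows "hproj (horth S) x \<in> horth S" and "x - hproj (horth S) x \<in> S"
proof -
  have scaleR_eq: "c *\<^sub>R v = complex_of_real c *s v" for c and v :: "complex^'m"
    unfolding vec_eq_iff by (simp add: scaleR_conv_of_real[where 'a=complex])
  have "subspace S"
    using assms unfolding vec.subspace_def subspace_def scaleR_eq by blast
  then obtain y z where y: "y \<in> S" and z: "\<And>w. w \<in> S \<Longrightarrow> orthogonal z w" and x: "x = y + z"
    using orthogonal_subspace_decomp_exists[of S x] span_eq_iff by metis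
  have "z \<in> horth S"
    unfolding horth_def
  proof (intro CollectI ballI)
    fix v assume "v \<in> S"
    then have "Re (herm z v) = 0" and "Re (herm z (\<i> *s v)) = 0"
      using z vec.subspace_scale[OF assms] by (simp_all add: Re_herm orthogonal_def)
    then show "herm z v = 0"
      by (simp add: herm_scale_right complex_eq_iff)
  qed
  moreover have "x - z \<in> S"
    using x y by simp
  ultimately show "hproj (horth S) x \<in> horth S" and "x - hproj (horth S) x \<in> S"
    using hproj_horth_unique by auto
qed

lemma hproj_horth_eq_iff:
  assumes "vec.subspace S"
  shows "hproj (horth S) x = hproj (horth S) y \<longleftrightarrow> x - y \<in> S"
proof
  assume "hproj (horth S) x = hproj (horth S) y"
  then have "x - y = (x - hproj (horth S) x) - (y - hproj (horth S) y)"
    by simp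
  then show "x - y \<in> S"
    using hproj_horth[OF assms] vec.subspace_diff[OF assms] by metis
next
  assume "x - y \<in> S"
  then have "x - hproj (horth S) y \<in> S"
    using hproj_horth(2)[OF assms, of y] vec.subspace_add[OF assms] by fastforce
  then show "hproj (horth S) x = hproj (horth S) y"
    using hproj_horth_unique hproj_horth(1)[OF assms] by blast
qed

lemma hproj_horth_eq_0_iff:
  assumes "vec.subspace S"
  shows "hproj (horth S) x = 0 \<longleftrightarrow> x \<in> S"
proof
  show "hproj (horth S) x = 0 \<Longrightarrow> x \<in> S"
    using hproj_horth(2)[OF assms, of x] by simp
  show "x \<in> S \<Longrightarrow> hproj (horth S) x = 0"
    by (rule hproj_horth_unique) (simp_all add: horth_def)
qed

lemma linear_hproj_horth:
  assumes "vec.subspace S"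
  shows "Vector_Spaces.linear (*s) (*s) (hproj (horth S))"
proof -
  let ?P = "hproj (horth S)"
  note P = hproj_horth[OF assms]
  have "?P (x + y) = ?P x + ?P y" for x y
  proof (rule hproj_horth_unique)
    show "?P x + ?P y \<in> horth S"
      using P horth_add by blast
    have "x + y - (?P x + ?P y) = (x - ?P x) + (y - ?P y)"
      by simp
    then show "x + y - (?P x + ?P y) \<in> S"
      using P vec.subspace_add[OF assms] by metis
  qed
  moreover have "?P (c *s x) = c *s ?P x" for c x
  proof (rule hproj_horth_unique)
    show "c *s ?P x \<in> horth S"
      using P horth_scale by blast
    have "c *s x - c *s ?P x = c *s (x - ?P x)"
      by (simp add: vec.scale_right_diff_distrib)
    then show "c *s x - c *s ?P x \<in> S"
      using P vec.subspace_scale[OF assms] by metis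
  qed
  ultimately show ?thesis
    by (simp add: Vector_Spaces.linear_iff vec.vector_space_axioms)
qed

text \<open>\<open>\<langle>B\<^sup>* P\<^sub>\<bottom> (B x), x\<rangle> = \<parallel>P\<^sub>\<bottom> (B x)\<parallel>\<^sup>2\<close>\<close>
lemma hadj_hproj_horth_eq_0_imp:
  assumes "vec.subspace S" and "hadj B *v hproj (horth S) (B *v x) = 0"
  shows "B *v x \<in> S"
proof -
  let ?Q = "hproj (horth S) (B *v x)"
  have "herm ?Q (B *v x - ?Q) = 0"
    using hproj_horth[OF assms(1)] by (rule horth_herm_eq_0)
  then have "herm ?Q ?Q = herm ?Q (B *v x)"
    by (simp add: herm_diff_right)
  also have "\<dots> = 0"
    using assms(2) by (simp flip: herm_hadj)
  finally show ?thesis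
    using hproj_horth_eq_0_iff[OF assms(1)] by (simp add: herm_self_eq_0_iff)
qed

lemma vec_subspace_crange: "vec.subspace (crange A)"
proof -
  have "crange A = range ((*v) A)"
    by (auto simp: crange_def)
  then show ?thesis
    using vec.subspace_image[OF vec.subspace_UNIV] by metis
qed

definition coincidence_free :: "complex^'n^'m \<Rightarrow> complex^'n^'m \<Rightarrow> bool" where
  "coincidence_free M N \<longleftrightarrow> (\<forall>y. M *v y = N *v cvec y \<longrightarrow> M *v y = 0)"

lemma subspace_homogeneous_imp_coincidence_free:
  assumes "vec.subspace {z. M *v z + N *v cvec z = 0}"
  shows "coincidence_free M N"
  unfolding coincidence_free_def
proof (intro allI impI)
  fix y assume y: "M *v y = N *v cvec y"
  have "M *v (\<i> *s y) + N *v cvec (\<i> *s y) = \<i> *s (M *v y - N *v cvec y)"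
    by (simp add: vector_scalar_commute vec.scale_right_diff_distrib)
  then have "\<i> *s y \<in> {z. M *v z + N *v cvec z = 0}"
    using y by simp
  then have "\<i> *s (\<i> *s y) \<in> {z. M *v z + N *v cvec z = 0}"
    by (rule vec.subspace_scale[OF assms])
  then have "M *v y + N *v cvec y = 0"
    by (simp add: vector_scalar_commute neg_eq_iff_add_eq_0)
  then show "M *v y = 0"
    using y by (simp add: vec_eq_iff)
qed

text \<open>Both \<open>x + c\<^sup>-\<close> and \<open>\<i> (x - c\<^sup>-)\<close> satisfy \<open>M y = N y\<^sup>-\<close>.\<close>
lemma coincidence_free_pair:
  assumes "coincidence_free M N" and "M *v x = N *v c" and "M *v cvec c = N *v cvec x"
  shows "M *v x = 0" and "N *v cvec x = 0"
proof -
  have "M *v (x + cvec c) = N *v cvec (x + cvec c)"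
    using assms(2,3) by (simp add: matrix_vector_right_distrib add.commute)
  then have "M *v (x + cvec c) = 0"
    using assms(1) unfolding coincidence_free_def by blast
  then have sum: "M *v x + M *v cvec c = 0"
    by (simp add: matrix_vector_right_distrib)
  have "M *v (\<i> *s (x - cvec c)) = N *v cvec (\<i> *s (x - cvec c))"
    using assms(2,3) by (simp add: vector_scalar_commute matrix_vector_mult_diff_distrib
        vec.scale_right_diff_distrib)
  then have "M *v (\<i> *s (x - cvec c)) = 0"
    using assms(1) unfolding coincidence_free_def by blast
  then have diff: "M *v x - M *v cvec c = 0"
    by (simp add: vector_scalar_commute matrix_vector_mult_diff_distrib)
  from sum diff show "M *v x = 0"
    by (simp add: vec_eq_iff)
  with sum assms(3) show "N *v cvec x = 0"
    by simp
qed

lemma homogeneous_solutions_eq_kernel: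
  assumes "coincidence_free M N"
  shows "{z. M *v z + N *v cvec z = 0} = {z. stack_mat M (cmat N) *v z = 0}"
proof -
  have "stack_mat M (cmat N) *v z = 0 \<longleftrightarrow> M *v z = 0 \<and> N *v cvec z = 0" for z
    by (metis stack_mat_vector_mult stack_vec_eq_iff stack_vec_zero cvec_matrix_vector_mult
        cvec_cvec cmat_cmat cvec_zero)
  moreover have "M *v z = 0 \<and> N *v cvec z = 0" if "M *v z + N *v cvec z = 0" for z
    using coincidence_free_pair[OF assms, of z "- cvec z"] that
    by (simp add: eq_neg_iff_add_eq_0 neg_eq_iff_add_eq_0)
  ultimately show ?thesis
    by auto
qed

lemma subspace_homogeneous_iff_coincidence_free:
  "vec.subspace {z. M *v z + N *v cvec z = 0} \<longleftrightarrow> coincidence_free M N"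
proof
  show "coincidence_free M N \<Longrightarrow> vec.subspace {z. M *v z + N *v cvec z = 0}"
    by (simp only: homogeneous_solutions_eq_kernel) (rule vec.subspace_kernel)
qed (rule subspace_homogeneous_imp_coincidence_free)

lemma stack_conj_in_crange_iff:
  "stack_vec w (cvec w) \<in> crange (stack_mat N (cmat M)) \<longleftrightarrow> (\<exists>y. M *v y = w \<and> N *v cvec y = w)"
proof -
  have "stack_vec w (cvec w) = stack_mat N (cmat M) *v c \<longleftrightarrow> w = N *v c \<and> cvec w = cmat M *v c"
    for c by (simp add: stack_mat_vector_mult stack_vec_eq_iff)
  also have "\<dots> c \<longleftrightarrow> M *v cvec c = w \<and> N *v cvec (cvec c) = w" for c
    by (metis cvec_cvec cvec_matrix_vector_mult cmat_cmat)
  finally have "stack_vec w (cvec w) \<in> crange (stack_mat N (cmat M))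
      \<longleftrightarrow> (\<exists>c. M *v cvec c = w \<and> N *v cvec (cvec c) = w)"
    unfolding crange_def by simp
  then show ?thesis
    by (metis cvec_cvec)
qed

lemma inj_hproj_stack_conj_iff:
  "inj (\<lambda>z. hproj (horth (crange (stack_mat N (cmat M)))) (stack_vec z (cvec z)))
     \<longleftrightarrow> coincidence_free M N"
proof -
  let ?f = "\<lambda>z. hproj (horth (crange (stack_mat N (cmat M)))) (stack_vec z (cvec z))"
  have eq: "?f x = ?f x' \<longleftrightarrow> (\<exists>y. M *v y = x - x' \<and> N *v cvec y = x - x')" for x x'
    by (simp add: hproj_horth_eq_iff vec_subspace_crange stack_vec_diff stack_conj_in_crange_iff
        flip: cvec_diff)
  show ?thesis
  proof
    assume "inj ?f"
    show "coincidence_free M N"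
      unfolding coincidence_free_def
    proof (intro allI impI)
      fix y assume "M *v y = N *v cvec y"
      then have "?f (M *v y) = ?f 0"
        using eq[of "M *v y" 0] by auto
      with \<open>inj ?f\<close> show "M *v y = 0"
        by (rule injD)
    qed
  next
    assume "coincidence_free M N"
    show "inj ?f"
    proof (rule injI)
      fix x x' assume "?f x = ?f x'"
      with eq obtain y where "M *v y = x - x'" and "N *v cvec y = x - x'"
        by blast
      with \<open>coincidence_free M N\<close> show "x = x'"
        unfolding coincidence_free_def by (metis eq_iff_diff_eq_0)
    qed
  qed
qed

lemma system_iff_stack:
  "M *v z + N *v cvec z = p \<longleftrightarrow>
     stack_vec p (cvec p) = stack_mat M (cmat N) *v z + stack_mat N (cmat M) *v cvec z"
proof -
  have "stack_mat M (cmat N) *v z + stack_mat N (cmat M) *v cvec z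
      = stack_vec (M *v z + N *v cvec z) (cvec (M *v z + N *v cvec z))"
    by (simp add: stack_mat_vector_mult stack_vec_add add.commute)
  then show ?thesis
    by (auto simp: stack_vec_eq_iff)
qed

lemma matrix_system_imp_coincidence_free:
  fixes M N U V :: "complex^'n^'n"
  assumes "\<forall>p \<in> sys_range M N. {z. M *v z + N *v cvec z = p}
             = {z. (U ** M + V ** cmat N) *v z = U *v p + V *v cvec p}"
  shows "coincidence_free M N"
proof -
  have "0 \<in> sys_range M N"
    unfolding sys_range_def by (auto intro: exI[of _ 0])
  then have "{z. M *v z + N *v cvec z = 0} = {z. (U ** M + V ** cmat N) *v z = 0}"
    using assms by simp
  then have "vec.subspace {z. M *v z + N *v cvec z = 0}"
    by (simp only:) (rule vec.subspace_kernel)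
  then show ?thesis
    by (rule subspace_homogeneous_imp_coincidence_free)
qed

lemma coincidence_free_imp_matrix_system:
  fixes M N :: "complex^'n^'n"
  assumes cf: "coincidence_free M N"
  shows "\<exists>U V :: complex^'n^'n. \<forall>p \<in> sys_range M N.
           {z. M *v z + N *v cvec z = p} = {z. (U ** M + V ** cmat N) *v z = U *v p + V *v cvec p}"
proof -
  define A where "A = stack_mat N (cmat M)"
  define B where "B = stack_mat M (cmat N)"
  define P where "P = hproj (horth (crange A))"
  define L where "L = hadj B ** matrix P"
  define U where "U = L ** stack_mat (mat 1) 0"
  define V where "V = L ** stack_mat 0 (mat 1)"
  have L: "L *v v = hadj B *v P v" for v
    unfolding L_def P_def
    by (simp add: matrix_vector_mul_assoc[symmetric] matrix_works linear_hproj_horth vec_subspace_crange)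
  have UV: "U *v a + V *v b = L *v stack_vec a b" for a b
    unfolding U_def V_def by (rule matrix_mult_stack_split)
  have G: "(U ** M + V ** cmat N) *v z = L *v (B *v z)" for z
    by (simp add: matrix_vector_mult_add_rdistrib matrix_vector_mul_assoc[symmetric] UV
        B_def stack_mat_vector_mult)
  have LA: "L *v (A *v c) = 0" for c
  proof -
    have "A *v c \<in> crange A"
      unfolding crange_def by blast
    then have "P (A *v c) = 0"
      unfolding P_def using hproj_horth_eq_0_iff[OF vec_subspace_crange] by blast
    then show ?thesis
      by (simp add: L)
  qed
  have LB: "M *v x = 0 \<and> N *v cvec x = 0" if "L *v (B *v x) = 0" for x
  proof -
    have "B *v x \<in> crange A"
      using hadj_hproj_horth_eq_0_imp[OF vec_subspace_crange] that by (simp add: L P_def)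
    then obtain c where "B *v x = A *v c"
      unfolding crange_def by blast
    then have "M *v x = N *v c" and "cmat N *v x = cmat M *v c"
      by (simp_all add: A_def B_def stack_mat_vector_mult stack_vec_eq_iff)
    moreover from this(2) have "M *v cvec c = N *v cvec x"
      by (metis cvec_cvec cvec_matrix_vector_mult cmat_cmat)
    ultimately show ?thesis
      using coincidence_free_pair[OF cf] by blast
  qed
  have image: "L *v (B *v z) = L *v stack_vec p (cvec p)" if "M *v z + N *v cvec z = p" for z p
    using that unfolding system_iff_stack
    by (simp add: A_def B_def matrix_vector_right_distrib LA[unfolded A_def])
  show ?thesis
  proof (intro exI ballI)
    fix p assume "p \<in> sys_range M N"
    then obtain z0 where z0: "M *v z0 + N *v cvec z0 = p"
      unfolding sys_range_def by blast
    show "{z. M *v z + N *v cvec z = p} = {z. (U ** M + V ** cmat N) *v z = U *v p + V *v cvec p}"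
    proof (intro set_eqI iffI; simp only: mem_Collect_eq G UV)
      fix z assume "M *v z + N *v cvec z = p"
      then show "L *v (B *v z) = L *v stack_vec p (cvec p)"
        by (rule image)
    next
      fix z assume "L *v (B *v z) = L *v stack_vec p (cvec p)"
      then have "L *v (B *v (z - z0)) = 0"
        using image[OF z0] by (simp add: matrix_vector_mult_diff_distrib)
      then have "M *v (z - z0) = 0 \<and> N *v cvec (z - z0) = 0"
        by (rule LB)
      then show "M *v z + N *v cvec z = p"
        using z0 by (simp add: matrix_vector_mult_diff_distrib)
    qed
  qed
qed

theorem proposition1:
  fixes M N :: "complex^'n^'n"
  defines "Pperp \<equiv> hproj (horth (crange (stack_mat N (cmat M))))"
  shows "(vec.subspace {z. M *v z + N *v cvec z = 0}
            \<longleftrightarrow> inj (\<lambda>z. Pperp (stack_vec z (cvec z))))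
       \<and> (inj (\<lambda>z. Pperp (stack_vec z (cvec z)))
            \<longleftrightarrow> (\<exists>U V :: complex^'n^'n. \<forall>p \<in> sys_range M N.
                  {z. M *v z + N *v cvec z = p}
                = {z. (U ** M + V ** cmat N) *v z = U *v p + V *v cvec p}))"
proof -
  have "vec.subspace {z. M *v z + N *v cvec z = 0} \<longleftrightarrow> coincidence_free M N"
    by (rule subspace_homogeneous_iff_coincidence_free)
  moreover have "inj (\<lambda>z. Pperp (stack_vec z (cvec z))) \<longleftrightarrow> coincidence_free M N"
    unfolding Pperp_def by (rule inj_hproj_stack_conj_iff)
  moreover have "(\<exists>U V :: complex^'n^'n. \<forall>p \<in> sys_range M N.
                  {z. M *v z + N *v cvec z = p}
                = {z. (U ** M + V ** cmat N) *v z = U *v p + V *v cvec p})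
      \<longleftrightarrow> coincidence_free M N"
    using matrix_system_imp_coincidence_free coincidence_free_imp_matrix_system by blast
  ultimately show ?thesis
    by blast
qed

end
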